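(* Let $(f_m)_{m\in\mathbb{N}}$, $f_m(z)=\sum_{k=0}^\infty a_k^{(m)}z^k$, be a sequence of functions analytic in the unit disk with real coefficients $a_k^{(m)}\in\mathbb{R}$ for all $k\in\mathbb{N}_0$, $m\in\mathbb{N}$. For $m\in\mathbb{N}$ and $n\in\mathbb{N}_0$ let $s_n^{(m)}=\sum_{k=0}^n a_k^{(m)}$. Suppose that (i) there exist a constant $0<K<\infty$ and real numbers $\alpha_m$, $m\in\mathbb{N}$, such that $\lim_{t\to1^-}f_m(t)=\alpha_m$ and $|\alpha_m|<K$ for all $m$; (ii) $(f_m)$ converges uniformly on $[0,1]$ as $m\to\infty$ (where $f_m$ is extended to $t=1$ by $f_m(1)=\alpha_m$); (iii) there exists a constant $0<L<\infty$ such that $s_n^{(m)}-\alpha_m<L$ for every $m\in\mathbb{N}$, $n\in\mathbb{N}_0$. Then for every $\epsilon>0$ there exists $N(\epsilon)\in\mathbb{N}$ such that \[ \left|\alpha_m-\frac{1}{n+1}\sum_{k=0}^n(n+1-k)a_k^{(m)}\right|=\left|\alpha_m-\frac{1}{n+1}\sum_{k=0}^n s_k^{(m)}\right|<\epsilon \] whenever $m,n>N(\epsilon)$.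
   Context: $\mathbb{N}_0=\mathbb{N}\cup\{0\}$. *)

theory Defs
  imports "HOL-Analysis.Analysis"
begin

definition pser :: "(nat \<Rightarrow> nat \<Rightarrow> real) \<Rightarrow> nat \<Rightarrow> real \<Rightarrow> real" where
  "pser a m t = (\<Sum>k. a m k * t ^ k)"

definition pser_ext :: "(nat \<Rightarrow> nat \<Rightarrow> real) \<Rightarrow> (nat \<Rightarrow> real) \<Rightarrow> nat \<Rightarrow> real \<Rightarrow> real" where
  "pser_ext a \<alpha> m t = (if t = 1 then \<alpha> m else pser a m t)"

end

theory Submission
  imports Defs
begin

text \<open>
  For fixed \<open>m\<close> put \<open>b n = L + \<alpha> m - s n\<close>, nonnegative by (iii). Its Abel mean
  \<open>(1 - y) \<Sum> b n y^n\<close> equals \<open>L - (f m y - \<alpha> m)\<close>, and (i) together with the uniform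
  convergence (ii) makes \<open>f m y - \<alpha> m \<rightarrow> 0\<close> as \<open>y \<rightarrow> 1-\<close> uniformly in \<open>m\<close>; so the Abel means
  of \<open>b\<close> tend to \<open>L\<close> jointly in \<open>(m, y)\<close>. Karamata's proof of the Hardy--Littlewood Tauberian
  theorem for nonnegative sequences then runs uniformly in \<open>m\<close>: by Weierstrass approximation,
  \<open>(1 - y) \<Sum> b n y^n \<phi> (y^n) - L (1 - y) \<Sum> y^n \<phi> (y^n) \<rightarrow> 0\<close> passes from \<open>\<phi> = 1\<close> to every
  continuous \<open>\<phi>\<close>; taking \<open>t \<phi> t\<close> close to the indicator of \<open>[1/e, 1]\<close> and \<open>y = exp (-1/N)\<close>
  isolates \<open>b 0 + \<dots> + b (N - 1)\<close>. Hence the Cesaro means of \<open>b\<close>, which are \<open>L + \<alpha> m\<close> minus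
  those of \<open>s\<close>, tend to \<open>L\<close>.
\<close>

section \<open>Karamata's functional\<close>

definition abel_mean :: "(nat \<Rightarrow> real) \<Rightarrow> real \<Rightarrow> (real \<Rightarrow> real) \<Rightarrow> real" where
  "abel_mean b y \<phi> = (1 - y) * (\<Sum>n. b n * y ^ n * \<phi> (y ^ n))"

definition abel_deviation :: "(nat \<Rightarrow> real) \<Rightarrow> real \<Rightarrow> real \<Rightarrow> (real \<Rightarrow> real) \<Rightarrow> real" where
  "abel_deviation b L y \<phi> = abel_mean b y \<phi> - L * abel_mean (\<lambda>_. 1) y \<phi>"

lemma abel_mean_geometric:
  assumes "0 \<le> y" "y < 1"
  shows "abel_mean (\<lambda>_. 1) y (\<lambda>_. 1) = 1"
  using assms unfolding abel_mean_def by (simp add: suminf_geometric)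

lemma summable_abel_mean_continuous:
  fixes b :: "nat \<Rightarrow> real"
  assumes nonneg: "\<And>n. 0 \<le> b n" and y: "0 \<le> y" "y \<le> 1"
    and summable: "summable (\<lambda>n. b n * y ^ n)" and cont: "continuous_on {0..1} \<phi>"
  shows "summable (\<lambda>n. b n * y ^ n * \<phi> (y ^ n))"
proof -
  obtain B where B: "\<forall>t\<in>{0..1}. \<bar>\<phi> t\<bar> \<le> B"
    using compact_imp_bounded[OF compact_continuous_image[OF cont compact_Icc]]
    unfolding bounded_real by blast
  have "norm (b n * y ^ n * \<phi> (y ^ n)) \<le> B * (b n * y ^ n)" for n
  proof -
    have "\<bar>\<phi> (y ^ n)\<bar> \<le> B" using B y by (simp add: power_le_one)
    then have "b n * y ^ n * \<bar>\<phi> (y ^ n)\<bar> \<le> b n * y ^ n * B"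
      using nonneg y by (intro mult_left_mono) auto
    then show ?thesis
      using nonneg y by (simp add: abs_mult mult.commute)
  qed
  then show ?thesis
    by (rule summable_comparison_test'[OF summable_mult[OF summable]])
qed

lemma abel_mean_diff_le:
  fixes b :: "nat \<Rightarrow> real"
  assumes nonneg: "\<And>n. 0 \<le> b n" and y: "0 \<le> y" "y < 1"
    and summable: "summable (\<lambda>n. b n * y ^ n)"
    and summable_\<phi>: "summable (\<lambda>n. b n * y ^ n * \<phi> (y ^ n))"
    and summable_\<psi>: "summable (\<lambda>n. b n * y ^ n * \<psi> (y ^ n))"
    and close: "\<And>t. t \<in> {0..1} \<Longrightarrow> \<bar>\<phi> t - \<psi> t\<bar> \<le> \<eta>"
  shows "\<bar>abel_mean b y \<phi> - abel_mean b y \<psi>\<bar> \<le> \<eta> * abel_mean b y (\<lambda>_. 1)"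
proof -
  define d where "d n = b n * y ^ n * (\<phi> (y ^ n) - \<psi> (y ^ n))" for n
  have bound: "\<bar>d n\<bar> \<le> \<eta> * (b n * y ^ n)" for n
  proof -
    have "\<bar>\<phi> (y ^ n) - \<psi> (y ^ n)\<bar> \<le> \<eta>" using close y by (simp add: power_le_one)
    then have "b n * y ^ n * \<bar>\<phi> (y ^ n) - \<psi> (y ^ n)\<bar> \<le> b n * y ^ n * \<eta>"
      using nonneg y by (intro mult_left_mono) auto
    then show ?thesis
      using nonneg y unfolding d_def by (simp add: abs_mult mult.commute)
  qed
  have summable_abs: "summable (\<lambda>n. \<bar>d n\<bar>)"
    using bound by (intro summable_comparison_test'[OF summable_mult[OF summable]]) auto
  have "abel_mean b y \<phi> - abel_mean b y \<psi> = (1 - y) * (\<Sum>n. d n)"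
    unfolding abel_mean_def d_def
    using suminf_diff[OF summable_\<phi> summable_\<psi>] by (simp add: algebra_simps)
  moreover have "\<bar>\<Sum>n. d n\<bar> \<le> \<eta> * (\<Sum>n. b n * y ^ n)"
  proof -
    have "\<bar>\<Sum>n. d n\<bar> \<le> (\<Sum>n. \<bar>d n\<bar>)" by (rule summable_rabs[OF summable_abs])
    also have "\<dots> \<le> (\<Sum>n. \<eta> * (b n * y ^ n))"
      by (rule suminf_le[OF bound summable_abs summable_mult[OF summable]])
    finally show ?thesis using suminf_mult[OF summable] by simp
  qed
  ultimately show ?thesis
    using y unfolding abel_mean_def by (simp add: abs_mult mult_left_mono mult.left_commute)
qed

lemma abel_monomial_term: "b n * y ^ n * (y ^ n) ^ k = b n * (y ^ Suc k) ^ n"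
  for y :: "'a::comm_monoid_mult"
  by (metis mult.assoc power_Suc power_mult mult.commute)

lemma abel_mean_monomial:
  assumes "0 \<le> y" "y < 1"
  shows "abel_mean b y (\<lambda>t. t ^ k) = (1 - y) / (1 - y ^ Suc k) * abel_mean b (y ^ Suc k) (\<lambda>_. 1)"
proof -
  have "y ^ Suc k < 1" using assms by (simp only: power_less_one_iff) simp
  then show ?thesis unfolding abel_mean_def abel_monomial_term by simp
qed

lemma abel_mean_sum:
  assumes "finite I" and "\<And>i. i \<in> I \<Longrightarrow> summable (\<lambda>n. b n * y ^ n * \<phi> i (y ^ n))"
  shows "abel_mean b y (\<lambda>t. \<Sum>i\<in>I. c i * \<phi> i t) = (\<Sum>i\<in>I. c i * abel_mean b y (\<phi> i))"
proof -
  have "(\<Sum>n. b n * y ^ n * (\<Sum>i\<in>I. c i * \<phi> i (y ^ n)))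
      = (\<Sum>n. \<Sum>i\<in>I. c i * (b n * y ^ n * \<phi> i (y ^ n)))"
    by (simp add: sum_distrib_left algebra_simps)
  also have "\<dots> = (\<Sum>i\<in>I. c i * (\<Sum>n. b n * y ^ n * \<phi> i (y ^ n)))"
    using assms by (subst suminf_sum) (auto intro: summable_mult simp: suminf_mult)
  finally show ?thesis
    unfolding abel_mean_def by (simp add: sum_distrib_left algebra_simps)
qed

lemma filterlim_apsnd:
  "filterlim g G' G \<Longrightarrow> filterlim (apsnd g) (F \<times>\<^sub>F G') (F \<times>\<^sub>F G)"
  unfolding filterlim_def prod_filtermap2[symmetric] by (rule prod_filter_mono) auto

lemma filterlim_power_at_left_one: "filterlim (\<lambda>y::real. y ^ Suc k) (at_left 1) (at_left 1)"
proof -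
  have "((\<lambda>y::real. y ^ Suc k) \<longlongrightarrow> 1) (at_left 1)"
    by (auto intro!: tendsto_eq_intros)
  moreover have "eventually (\<lambda>y::real. y ^ Suc k < 1) (at_left 1)"
    using eventually_at_left_real[OF zero_less_one]
    by (rule eventually_mono) (metis greaterThanLessThan_iff power_Suc_less_one)
  ultimately show ?thesis
    by (auto simp: filterlim_at elim: eventually_mono)
qed

lemma abel_deviation_tendsto_monomial:
  fixes b :: "'i \<Rightarrow> nat \<Rightarrow> real"
  assumes abel: "((\<lambda>(m, y). abel_mean (b m) y (\<lambda>_. 1)) \<longlongrightarrow> L) (F \<times>\<^sub>F at_left 1)"
  shows "((\<lambda>(m, y). abel_deviation (b m) L y (\<lambda>t. t ^ k)) \<longlongrightarrow> 0) (F \<times>\<^sub>F at_left 1)"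
  unfolding abel_deviation_def
proof (rule Lim_null_comparison)
  let ?g = "\<lambda>(m, y). \<bar>abel_mean (b m) (y ^ Suc k) (\<lambda>_. 1) - L\<bar>"
  have "((\<lambda>(m, y). abel_mean (b m) (y ^ Suc k) (\<lambda>_. 1)) \<longlongrightarrow> L) (F \<times>\<^sub>F at_left 1)"
    using filterlim_compose[OF abel filterlim_apsnd[OF filterlim_power_at_left_one]]
    by (simp add: case_prod_unfold)
  from tendsto_rabs_zero[OF LIM_zero[OF this]] show "(?g \<longlongrightarrow> 0) (F \<times>\<^sub>F at_left 1)"
    by (simp add: case_prod_unfold)
  have "eventually (\<lambda>(m, y::real). 0 < y \<and> y < 1) (F \<times>\<^sub>F at_left 1)"
    using eventually_prodI[where F=F, OF eventually_True eventually_at_left_real[OF zero_less_one]]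
    by (rule eventually_mono) auto
  then show "eventually (\<lambda>x. norm ((\<lambda>(m, y). abel_mean (b m) y (\<lambda>t. t ^ k)
      - L * abel_mean (\<lambda>_. 1) y (\<lambda>t. t ^ k)) x) \<le> ?g x) (F \<times>\<^sub>F at_left 1)"
  proof (rule eventually_mono, clarify)
    fix m and y :: real
    assume y: "0 < y" "y < 1"
    define q where "q = (1 - y) / (1 - y ^ Suc k)"
    have "y ^ Suc k \<le> y" using y by (intro power_Suc_le_self) auto
    then have q: "0 \<le> q" "q \<le> 1"
      unfolding q_def using y by (simp_all del: power_Suc add: divide_le_eq_1)
    have "y ^ Suc k < 1" using y by (intro power_Suc_less_one)
    have monomial: "abel_mean c y (\<lambda>t. t ^ k) = q * abel_mean c (y ^ Suc k) (\<lambda>_. 1)" for c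
      unfolding q_def by (rule abel_mean_monomial) (use y in auto)
    have "abel_mean (b m) y (\<lambda>t. t ^ k) - L * abel_mean (\<lambda>_. 1) y (\<lambda>t. t ^ k)
        = q * (abel_mean (b m) (y ^ Suc k) (\<lambda>_. 1) - L)"
      using abel_mean_geometric[OF _ \<open>y ^ Suc k < 1\<close>] y
      by (simp del: power_Suc add: monomial algebra_simps)
    then show "norm (abel_mean (b m) y (\<lambda>t. t ^ k) - L * abel_mean (\<lambda>_. 1) y (\<lambda>t. t ^ k))
        \<le> \<bar>abel_mean (b m) (y ^ Suc k) (\<lambda>_. 1) - L\<bar>"
      using q by (simp add: abs_mult mult_left_le_one_le)
  qed
qed

lemma abel_deviation_tendsto_polynomial:
  fixes b :: "'i \<Rightarrow> nat \<Rightarrow> real"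
  assumes summable: "eventually (\<lambda>m. \<forall>z\<in>{0..<1}. summable (\<lambda>n. b m n * z ^ n)) F"
    and abel: "((\<lambda>(m, y). abel_mean (b m) y (\<lambda>_. 1)) \<longlongrightarrow> L) (F \<times>\<^sub>F at_left 1)"
    and p: "real_polynomial_function p"
  shows "((\<lambda>(m, y). abel_deviation (b m) L y p) \<longlongrightarrow> 0) (F \<times>\<^sub>F at_left 1)"
proof -
  obtain c d where p_eq: "p = (\<lambda>t. \<Sum>i\<le>d. c i * t ^ i)"
    using p real_polynomial_function_iff_sum by blast
  have mean_linear: "abel_mean e y p = (\<Sum>i\<le>d. c i * abel_mean e y (\<lambda>t. t ^ i))"
    if "\<forall>z\<in>{0..<1}. summable (\<lambda>n. e n * z ^ n)" "y \<in> {0<..<1}" for e y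
  proof -
    have "y ^ Suc i \<in> {0..<1}" for i
      using that by (simp del: power_Suc add: power_Suc_less_one)
    then show ?thesis
      unfolding p_eq using that by (intro abel_mean_sum) (auto simp: abel_monomial_term)
  qed
  have deviation_linear:
    "abel_deviation (b m) L y p = (\<Sum>i\<le>d. c i * abel_deviation (b m) L y (\<lambda>t. t ^ i))"
    if "\<forall>z\<in>{0..<1}. summable (\<lambda>n. b m n * z ^ n)" "y \<in> {0<..<1}" for m y
    using mean_linear[OF that] mean_linear[of "\<lambda>_. 1", OF _ that(2)]
    by (simp add: abel_deviation_def summable_geometric sum_subtractf sum_distrib_left algebra_simps)
  have "((\<lambda>(m, y). \<Sum>i\<le>d. c i * abel_deviation (b m) L y (\<lambda>t. t ^ i)) \<longlongrightarrow> (\<Sum>i\<le>d. c i * 0))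
      (F \<times>\<^sub>F at_left 1)"
    unfolding case_prod_unfold
    by (intro tendsto_sum tendsto_mult tendsto_const
        abel_deviation_tendsto_monomial[OF abel, unfolded case_prod_unfold])
  moreover have "eventually (\<lambda>(m, y::real). (\<forall>z\<in>{0..<1}. summable (\<lambda>n. b m n * z ^ n)) \<and> y \<in> {0<..<1})
      (F \<times>\<^sub>F at_left 1)"
    using eventually_prodI[OF summable eventually_at_left_real[OF zero_less_one]]
    by (simp add: case_prod_unfold)
  then have "eventually (\<lambda>(m, y). (\<Sum>i\<le>d. c i * abel_deviation (b m) L y (\<lambda>t. t ^ i))
      = abel_deviation (b m) L y p) (F \<times>\<^sub>F at_left 1)"
    by (rule eventually_mono) (auto simp: deviation_linear)
  ultimately show ?thesis
    by (simp add: tendsto_cong[where F="F \<times>\<^sub>F at_left 1"] case_prod_unfold)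
qed

lemma abel_deviation_diff_le:
  fixes b :: "nat \<Rightarrow> real"
  assumes nonneg: "\<And>n. 0 \<le> b n" and y: "0 \<le> y" "y < 1"
    and summable: "summable (\<lambda>n. b n * y ^ n)" and L: "0 \<le> L"
    and cont: "continuous_on {0..1} \<phi>" "continuous_on {0..1} \<psi>"
    and close: "\<And>t. t \<in> {0..1} \<Longrightarrow> \<bar>\<phi> t - \<psi> t\<bar> \<le> \<eta>"
  shows "\<bar>abel_deviation b L y \<phi> - abel_deviation b L y \<psi>\<bar> \<le> \<eta> * (abel_mean b y (\<lambda>_. 1) + L)"
proof -
  have summable_1: "summable (\<lambda>n. 1 * y ^ n)" using y summable_geometric[of y] by simp
  have "\<bar>abel_mean b y \<phi> - abel_mean b y \<psi>\<bar> \<le> \<eta> * abel_mean b y (\<lambda>_. 1)"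
    using nonneg y cont
    by (intro abel_mean_diff_le close summable summable_abel_mean_continuous[OF _ _ _ summable]) auto
  moreover have "\<bar>abel_mean (\<lambda>_. 1) y \<phi> - abel_mean (\<lambda>_. 1) y \<psi>\<bar> \<le> \<eta>"
    using abel_mean_diff_le[OF _ y summable_1 _ _ close] abel_mean_geometric[OF y] y cont
      summable_abel_mean_continuous[OF _ _ _ summable_1]
    by simp
  then have "\<bar>L * abel_mean (\<lambda>_. 1) y \<phi> - L * abel_mean (\<lambda>_. 1) y \<psi>\<bar> \<le> L * \<eta>"
    using L by (simp add: abs_mult mult_left_mono flip: right_diff_distrib)
  ultimately show ?thesis
    unfolding abel_deviation_def by (simp add: algebra_simps)
qed

lemma abel_deviation_tendsto_continuous:
  fixes b :: "'i \<Rightarrow> nat \<Rightarrow> real"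
  assumes nonneg: "eventually (\<lambda>m. \<forall>n. 0 \<le> b m n) F"
    and summable: "eventually (\<lambda>m. \<forall>z\<in>{0..<1}. summable (\<lambda>n. b m n * z ^ n)) F"
    and abel: "((\<lambda>(m, y). abel_mean (b m) y (\<lambda>_. 1)) \<longlongrightarrow> L) (F \<times>\<^sub>F at_left 1)"
    and L: "0 \<le> L" and cont: "continuous_on {0..1} \<phi>"
  shows "((\<lambda>(m, y). abel_deviation (b m) L y \<phi>) \<longlongrightarrow> 0) (F \<times>\<^sub>F at_left 1)"
proof (rule tendstoI)
  fix e :: real
  assume "0 < e"
  define \<eta> where "\<eta> = e / (4 * (L + 1))"
  have "0 < \<eta>" unfolding \<eta>_def using \<open>0 < e\<close> L by simp
  moreover have "\<eta> * (2 * L + 2) = e / 2" unfolding \<eta>_def using L by (simp add: field_simps)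
  ultimately have \<eta>: "0 < \<eta>" "\<eta> * (2 * L + 1) < e / 2" by (simp_all add: algebra_simps)
  obtain p where p: "real_polynomial_function p" and close: "\<And>t. t \<in> {0..1} \<Longrightarrow> \<bar>\<phi> t - p t\<bar> < \<eta>"
    using Stone_Weierstrass_real_polynomial_function[OF compact_Icc cont \<open>0 < \<eta>\<close>] by blast
  have cont_p: "continuous_on {0..1} p"
    using continuous_on_polymonial_function p real_polynomial_function_eq by blast
  have close': "\<bar>\<phi> t - p t\<bar> \<le> \<eta>" if "t \<in> {0..1}" for t
    using less_imp_le[OF close[OF that]] .
  have "eventually (\<lambda>(m, y::real). ((\<forall>n. 0 \<le> b m n) \<and> (\<forall>z\<in>{0..<1}. summable (\<lambda>n. b m n * z ^ n)))
      \<and> y \<in> {0<..<1}) (F \<times>\<^sub>F at_left 1)"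
    using eventually_prodI[OF eventually_conj[OF nonneg summable] eventually_at_left_real[OF zero_less_one]]
    by (simp add: case_prod_unfold)
  moreover have "eventually (\<lambda>(m, y). \<bar>abel_deviation (b m) L y p\<bar> < e / 2) (F \<times>\<^sub>F at_left 1)"
    using tendstoD[OF abel_deviation_tendsto_polynomial[OF summable abel p], of "e / 2"] \<open>0 < e\<close>
    by (simp add: case_prod_unfold dist_real_def)
  moreover have "eventually (\<lambda>(m, y). abel_mean (b m) y (\<lambda>_. 1) < L + 1) (F \<times>\<^sub>F at_left 1)"
    using order_tendstoD(2)[OF abel, of "L + 1"] by (simp add: case_prod_unfold)
  ultimately show "eventually (\<lambda>x. dist ((\<lambda>(m, y). abel_deviation (b m) L y \<phi>) x) 0 < e)
      (F \<times>\<^sub>F at_left 1)"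
  proof eventually_elim
    case (elim x)
    obtain m y where x: "x = (m, y)" by fastforce
    have "\<bar>abel_deviation (b m) L y \<phi> - abel_deviation (b m) L y p\<bar>
        \<le> \<eta> * (abel_mean (b m) y (\<lambda>_. 1) + L)"
      using elim L cont cont_p close' unfolding x
      by (intro abel_deviation_diff_le) auto
    also have "\<dots> \<le> \<eta> * (2 * L + 1)" using elim \<eta> unfolding x by simp
    finally show ?case using elim \<eta> unfolding x by (simp add: dist_real_def)
  qed
qed

section \<open>Karamata's Tauberian theorem\<close>

text \<open>\<open>t * ramp_step a c t\<close> rises linearly from \<open>0\<close> at \<open>a\<close> to \<open>1\<close> at \<open>c\<close>; dividing by \<open>max t a\<close>
  rather than \<open>t\<close> keeps \<open>ramp_step a c\<close> itself continuous at \<open>0\<close>.\<close>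
definition ramp_step :: "real \<Rightarrow> real \<Rightarrow> real \<Rightarrow> real" where
  "ramp_step a c t = max 0 (min 1 ((t - a) / (c - a))) / max t a"

lemma continuous_on_ramp_step: "0 < a \<Longrightarrow> a < c \<Longrightarrow> continuous_on S (ramp_step a c)"
  unfolding ramp_step_def by (intro continuous_intros) auto

lemma ramp_step_bounds:
  assumes "0 < t" "0 < a"
  shows "0 \<le> t * ramp_step a c t" "t * ramp_step a c t \<le> 1"
proof -
  define v where "v = max 0 (min 1 ((t - a) / (c - a)))"
  have "0 \<le> v" "v \<le> 1" unfolding v_def by auto
  then have "0 \<le> t * v" "t * v \<le> max t a"
    using assms by (auto intro: mult_left_le_one_le order_trans[OF _ max.cobounded1])
  moreover have "t * ramp_step a c t = t * v / max t a" unfolding ramp_step_def v_def by simp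
  ultimately show "0 \<le> t * ramp_step a c t" "t * ramp_step a c t \<le> 1"
    using assms by auto
qed

lemma ramp_step_below:
  assumes "0 < t" "t \<le> a" "a < c"
  shows "t * ramp_step a c t = 0"
  using assms unfolding ramp_step_def by (simp add: divide_nonpos_pos)

lemma ramp_step_above:
  assumes "0 < a" "a < c" "c \<le> t"
  shows "t * ramp_step a c t = 1"
  using assms unfolding ramp_step_def by (simp add: max_def)

lemma abel_mean_ge_partial_sum:
  fixes b :: "nat \<Rightarrow> real"
  assumes nonneg: "\<And>n. 0 \<le> b n" and y: "0 < y" "y < 1"
    and summable: "summable (\<lambda>n. b n * y ^ n * \<psi> (y ^ n))"
    and \<psi>_nonneg: "\<And>n. 0 \<le> y ^ n * \<psi> (y ^ n)"
    and \<psi>_one: "\<And>k. k < N \<Longrightarrow> y ^ k * \<psi> (y ^ k) = 1"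
  shows "(1 - y) * (\<Sum>k<N. b k) \<le> abel_mean b y \<psi>"
proof -
  have "(\<Sum>k<N. b k) = (\<Sum>k<N. b k * y ^ k * \<psi> (y ^ k))"
    using \<psi>_one by (simp add: mult.assoc)
  also have "\<dots> \<le> (\<Sum>n. b n * y ^ n * \<psi> (y ^ n))"
    using nonneg \<psi>_nonneg
    by (intro sum_le_suminf[OF summable]) (auto simp: mult.assoc)
  finally show ?thesis
    unfolding abel_mean_def using y by (intro mult_left_mono) auto
qed

lemma abel_mean_le_partial_sum:
  fixes b :: "nat \<Rightarrow> real"
  assumes nonneg: "\<And>n. 0 \<le> b n" and y: "y < 1"
    and \<psi>_le_one: "\<And>n. y ^ n * \<psi> (y ^ n) \<le> 1"
    and \<psi>_zero: "\<And>k. N \<le> k \<Longrightarrow> y ^ k * \<psi> (y ^ k) = 0"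
  shows "abel_mean b y \<psi> \<le> (1 - y) * (\<Sum>k<N. b k)"
proof -
  have "(\<Sum>n. b n * y ^ n * \<psi> (y ^ n)) = (\<Sum>k<N. b k * y ^ k * \<psi> (y ^ k))"
    using \<psi>_zero by (intro suminf_finite) (auto simp: mult.assoc not_less)
  also have "\<dots> \<le> (\<Sum>k<N. b k)"
    using nonneg \<psi>_le_one
    by (intro sum_mono) (simp add: mult.assoc mult_left_le)
  finally show ?thesis
    unfolding abel_mean_def using y by (intro mult_left_mono) auto
qed

lemma one_minus_exp_neg_ge:
  fixes h :: real
  assumes "0 \<le> h" "h \<le> 1"
  shows "h / 2 \<le> 1 - exp (- h)"
proof -
  have "exp (- h) \<le> inverse (1 + h)"
    unfolding exp_minus using assms by (intro le_imp_inverse_le exp_ge_add_one_self) auto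
  moreover have "h / 2 \<le> h / (1 + h)"
    using assms by (intro divide_left_mono) auto
  moreover have "h / (1 + h) = 1 - inverse (1 + h)"
    using assms by (simp add: field_simps)
  ultimately show ?thesis by linarith
qed

lemma exp_neg_inverse_power: "exp (- 1 / real N) ^ k = exp (- (real k / real N))"
  by (simp add: exp_of_nat_mult[symmetric])

lemma exp_neg_inverse_bounds:
  assumes "0 < N"
  shows "0 < exp (- 1 / real N)" "exp (- 1 / real N) < 1"
    and "1 / 2 \<le> (1 - exp (- 1 / real N)) * real N"
proof -
  show "0 < exp (- 1 / real N)" "exp (- 1 / real N) < 1" using assms by auto
  have "(1 / real N) / 2 \<le> 1 - exp (- (1 / real N))"
    using assms by (intro one_minus_exp_neg_ge) auto
  then show "1 / 2 \<le> (1 - exp (- 1 / real N)) * real N"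
    using assms by (simp add: field_simps)
qed

lemma real_nat_floor_ge_diff_one: "x - 1 \<le> real (nat \<lfloor>x\<rfloor>)"
proof -
  have "x - 1 \<le> of_int \<lfloor>x\<rfloor>" by linarith
  also have "\<dots> \<le> real (nat \<lfloor>x\<rfloor>)" by (cases "\<lfloor>x\<rfloor> \<ge> 0") simp_all
  finally show ?thesis .
qed

text \<open>With \<open>y = exp (-1/N)\<close> we have \<open>y^k \<ge> 1/e\<close> exactly for \<open>k \<le> N\<close>, so the two ramps below
  sandwich the indicator of \<open>{k < N}\<close>, up to a window of width \<open>\<theta> N\<close>.\<close>

lemma abel_mean_ramp_step_upper:
  fixes N :: nat and \<theta> :: real
  defines "y \<equiv> exp (- 1 / real N)"
  assumes N: "0 < N" and \<theta>: "0 < \<theta>"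
  shows "abel_mean (\<lambda>_. 1) y (ramp_step (exp (- (1 + \<theta>))) (exp (- 1))) \<le> (1 - y) * ((1 + \<theta>) * N + 1)"
proof -
  define K where "K = nat \<lceil>(1 + \<theta>) * N\<rceil>"
  have y: "0 < y" "y < 1" unfolding y_def using exp_neg_inverse_bounds[OF N] by auto
  have ramp: "0 < exp (- (1 + \<theta>))" "exp (- (1 + \<theta>)) < exp (- 1)" using \<theta> by auto
  have "abel_mean (\<lambda>_. 1) y (ramp_step (exp (- (1 + \<theta>))) (exp (- 1))) \<le> (1 - y) * (\<Sum>k<K. 1)"
  proof (rule abel_mean_le_partial_sum)
    fix k assume "K \<le> k"
    then have "(1 + \<theta>) * N \<le> k" unfolding K_def by linarith
    then have "y ^ k \<le> exp (- (1 + \<theta>))"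
      unfolding y_def exp_neg_inverse_power using N by (simp add: field_simps)
    then show "y ^ k * ramp_step (exp (- (1 + \<theta>))) (exp (- 1)) (y ^ k) = 0"
      using y ramp by (intro ramp_step_below) auto
  qed (use y ramp_step_bounds[OF _ ramp(1)] in auto)
  moreover have "real K \<le> (1 + \<theta>) * N + 1"
    unfolding K_def using \<theta> of_int_ceiling_le_add_one[of "(1 + \<theta>) * N"] by simp
  ultimately show ?thesis using y by (simp add: order_trans[OF _ mult_left_mono])
qed

lemma abel_mean_ramp_step_lower:
  fixes N :: nat and \<theta> :: real
  defines "y \<equiv> exp (- 1 / real N)"
  assumes N: "0 < N" and \<theta>: "0 < \<theta>"
  shows "(1 - y) * ((1 - \<theta>) * N - 1) \<le> abel_mean (\<lambda>_. 1) y (ramp_step (exp (- 1)) (exp (- (1 - \<theta>))))"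
proof -
  define K where "K = nat \<lfloor>(1 - \<theta>) * N\<rfloor>"
  define \<psi> where "\<psi> = ramp_step (exp (- 1)) (exp (- (1 - \<theta>)))"
  have y: "0 < y" "y < 1" unfolding y_def using exp_neg_inverse_bounds[OF N] by auto
  have ramp: "0 < exp (- 1 :: real)" "exp (- 1) < exp (- (1 - \<theta>))" using \<theta> by auto
  have summable_\<psi>: "summable (\<lambda>n. 1 * y ^ n * \<psi> (y ^ n))"
    unfolding \<psi>_def using y summable_geometric[of y]
    by (intro summable_abel_mean_continuous continuous_on_ramp_step[OF ramp]) auto
  have "(1 - y) * (\<Sum>k<K. 1) \<le> abel_mean (\<lambda>_. 1) y \<psi>"
  proof (rule abel_mean_ge_partial_sum[OF _ y summable_\<psi>])
    fix k assume "k < K"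
    then have "k < (1 - \<theta>) * N" unfolding K_def by linarith
    then have "exp (- (1 - \<theta>)) \<le> y ^ k"
      unfolding y_def exp_neg_inverse_power using N by (simp add: field_simps)
    then show "y ^ k * \<psi> (y ^ k) = 1" unfolding \<psi>_def by (rule ramp_step_above[OF ramp])
  qed (use y ramp_step_bounds[OF _ ramp(1)] in \<open>auto simp: \<psi>_def\<close>)
  moreover have "(1 - \<theta>) * N - 1 \<le> real K"
    unfolding K_def by (rule real_nat_floor_ge_diff_one)
  ultimately show ?thesis unfolding \<psi>_def using y by (simp add: order_trans[OF mult_left_mono])
qed

lemma cesaro_mean_le_of_abel_deviation:
  fixes b :: "nat \<Rightarrow> real" and N :: nat and \<theta> :: real
  defines "y \<equiv> exp (- 1 / real N)" and "\<psi> \<equiv> ramp_step (exp (- (1 + \<theta>))) (exp (- 1))"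
  assumes nonneg: "\<And>n. 0 \<le> b n" and summable: "summable (\<lambda>n. b n * y ^ n)"
    and N: "0 < N" and \<theta>: "0 < \<theta>" and L: "0 \<le> L"
    and close: "\<bar>abel_deviation b L y \<psi>\<bar> \<le> \<epsilon>"
  shows "(\<Sum>k<N. b k) / N \<le> L * (1 + \<theta>) + L / N + 2 * \<epsilon>"
proof -
  define r where "r = (1 - y) * N"
  have y: "0 < y" "y < 1" and r: "1 / 2 \<le> r"
    unfolding y_def r_def using exp_neg_inverse_bounds[OF N] by auto
  have ramp: "0 < exp (- (1 + \<theta>))" "exp (- (1 + \<theta>)) < exp (- 1)" using \<theta> by auto
  have summable_\<psi>: "summable (\<lambda>n. b n * y ^ n * \<psi> (y ^ n))"
    unfolding \<psi>_def using nonneg y summable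
    by (intro summable_abel_mean_continuous continuous_on_ramp_step[OF ramp]) auto
  have partial_sum: "(1 - y) * (\<Sum>k<N. b k) \<le> abel_mean b y \<psi>"
  proof (rule abel_mean_ge_partial_sum[OF nonneg y summable_\<psi>])
    fix k assume "k < N"
    then have "exp (- 1) \<le> y ^ k" unfolding y_def exp_neg_inverse_power by simp
    then show "y ^ k * \<psi> (y ^ k) = 1" unfolding \<psi>_def by (rule ramp_step_above[OF ramp])
  qed (use y ramp_step_bounds[OF _ ramp(1)] in \<open>auto simp: \<psi>_def\<close>)
  have "L * abel_mean (\<lambda>_. 1) y \<psi> \<le> L * ((1 - y) * ((1 + \<theta>) * N + 1))"
    using abel_mean_ramp_step_upper[OF N \<theta>] L unfolding y_def \<psi>_def by (rule mult_left_mono)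
  also have "\<dots> = r * (L * (1 + \<theta>) + L / N)"
    unfolding r_def using N by (simp add: field_simps)
  finally have "r * ((\<Sum>k<N. b k) / N) \<le> r * (L * (1 + \<theta>) + L / N) + \<epsilon>"
    using partial_sum close N unfolding r_def abel_deviation_def by simp
  also have "\<dots> = r * (L * (1 + \<theta>) + L / N + \<epsilon> / r)"
    using r by (simp add: distrib_left)
  finally have "(\<Sum>k<N. b k) / N \<le> L * (1 + \<theta>) + L / N + \<epsilon> / r"
    by (rule mult_left_le_imp_le) (use r in simp)
  moreover have "\<epsilon> / r \<le> \<epsilon> / (1 / 2)"
    using r close by (intro divide_left_mono) auto
  ultimately show ?thesis by simp
qed

lemma cesaro_mean_ge_of_abel_deviation:
  fixes b :: "nat \<Rightarrow> real" and N :: nat and \<theta> :: real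
  defines "y \<equiv> exp (- 1 / real N)" and "\<psi> \<equiv> ramp_step (exp (- 1)) (exp (- (1 - \<theta>)))"
  assumes nonneg: "\<And>n. 0 \<le> b n"
    and N: "0 < N" and \<theta>: "0 < \<theta>" and L: "0 \<le> L"
    and close: "\<bar>abel_deviation b L y \<psi>\<bar> \<le> \<epsilon>"
  shows "L * (1 - \<theta>) - L / N - 2 * \<epsilon> \<le> (\<Sum>k<N. b k) / N"
proof -
  define r where "r = (1 - y) * N"
  have y: "0 < y" "y < 1" and r: "1 / 2 \<le> r"
    unfolding y_def r_def using exp_neg_inverse_bounds[OF N] by auto
  have ramp: "0 < exp (- 1 :: real)" "exp (- 1) < exp (- (1 - \<theta>))" using \<theta> by auto
  have partial_sum: "abel_mean b y \<psi> \<le> (1 - y) * (\<Sum>k<N. b k)"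
  proof (rule abel_mean_le_partial_sum[OF nonneg y(2)])
    fix k assume "N \<le> k"
    then have "y ^ k \<le> exp (- 1)"
      unfolding y_def exp_neg_inverse_power using N by (simp add: field_simps)
    then show "y ^ k * \<psi> (y ^ k) = 0"
      unfolding \<psi>_def using y ramp by (intro ramp_step_below) auto
  qed (use y ramp_step_bounds[OF _ ramp(1)] in \<open>auto simp: \<psi>_def\<close>)
  have "r * (L * (1 - \<theta>) - L / N) = L * ((1 - y) * ((1 - \<theta>) * N - 1))"
    unfolding r_def using N by (simp add: field_simps)
  also have "\<dots> \<le> L * abel_mean (\<lambda>_. 1) y \<psi>"
    using abel_mean_ramp_step_lower[OF N \<theta>] L unfolding y_def \<psi>_def by (rule mult_left_mono)
  finally have "r * (L * (1 - \<theta>) - L / N) - \<epsilon> \<le> r * ((\<Sum>k<N. b k) / N)"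
    using partial_sum close N unfolding r_def abel_deviation_def by simp
  moreover have "r * (L * (1 - \<theta>) - L / N) - \<epsilon> = r * (L * (1 - \<theta>) - L / N - \<epsilon> / r)"
    using r by (simp add: right_diff_distrib)
  ultimately have "r * (L * (1 - \<theta>) - L / N - \<epsilon> / r) \<le> r * ((\<Sum>k<N. b k) / N)"
    by simp
  then have "L * (1 - \<theta>) - L / N - \<epsilon> / r \<le> (\<Sum>k<N. b k) / N"
    by (rule mult_left_le_imp_le) (use r in simp)
  moreover have "\<epsilon> / r \<le> \<epsilon> / (1 / 2)"
    using r close by (intro divide_left_mono) auto
  ultimately show ?thesis by simp
qed

lemma cesaro_mean_close_of_abel_deviation:
  fixes b :: "nat \<Rightarrow> real" and N :: nat and \<theta> :: real
  defines "y \<equiv> exp (- 1 / real N)"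
  assumes nonneg: "\<And>n. 0 \<le> b n" and summable: "summable (\<lambda>n. b n * y ^ n)"
    and N: "0 < N" and \<theta>: "0 < \<theta>" and L: "0 \<le> L"
    and close_up: "\<bar>abel_deviation b L y (ramp_step (exp (- (1 + \<theta>))) (exp (- 1)))\<bar> \<le> \<epsilon>"
    and close_down: "\<bar>abel_deviation b L y (ramp_step (exp (- 1)) (exp (- (1 - \<theta>))))\<bar> \<le> \<epsilon>"
  shows "\<bar>(\<Sum>k<N. b k) / N - L\<bar> \<le> L * \<theta> + L / N + 2 * \<epsilon>"
  using cesaro_mean_le_of_abel_deviation[OF nonneg summable[unfolded y_def] N \<theta> L close_up[unfolded y_def]]
    cesaro_mean_ge_of_abel_deviation[OF nonneg N \<theta> L close_down[unfolded y_def]]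
  by (simp add: abs_le_iff algebra_simps)

lemma filterlim_exp_neg_inverse_at_left_one:
  "filterlim (\<lambda>N. exp (- 1 / real N)) (at_left 1) sequentially"
proof -
  have "((\<lambda>N. exp (- (1 / real N))) \<longlongrightarrow> exp (- 0)) sequentially"
    by (intro tendsto_exp tendsto_minus lim_1_over_n)
  moreover have "eventually (\<lambda>N. exp (- 1 / real N) < 1) sequentially"
    using eventually_gt_at_top[of 0] by eventually_elim simp
  ultimately show ?thesis
    by (auto simp: filterlim_at elim: eventually_mono)
qed

theorem cesaro_tendsto_of_abel_tendsto:
  fixes b :: "'i \<Rightarrow> nat \<Rightarrow> real"
  assumes nonneg: "eventually (\<lambda>m. \<forall>n. 0 \<le> b m n) F"
    and summable: "eventually (\<lambda>m. \<forall>z\<in>{0..<1}. summable (\<lambda>n. b m n * z ^ n)) F"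
    and abel: "((\<lambda>(m, y). abel_mean (b m) y (\<lambda>_. 1)) \<longlongrightarrow> L) (F \<times>\<^sub>F at_left 1)"
    and L: "0 \<le> L"
  shows "((\<lambda>(m, N). (\<Sum>k<N. b m k) / real N) \<longlongrightarrow> L) (F \<times>\<^sub>F sequentially)"
proof (rule tendstoI)
  fix e :: real
  assume "0 < e"
  define \<theta> where "\<theta> = e / (4 * (L + 1))"
  define \<epsilon> where "\<epsilon> = e / 8"
  have \<theta>: "0 < \<theta>" "L * \<theta> < e / 4"
    unfolding \<theta>_def using \<open>0 < e\<close> L by (auto simp: field_simps)
  have small: "eventually (\<lambda>(m, N). \<bar>abel_deviation (b m) L (exp (- 1 / real N)) \<psi>\<bar> < \<epsilon>)
      (F \<times>\<^sub>F sequentially)" if "continuous_on {0..1} \<psi>" for \<psi>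
    using tendstoD[OF filterlim_compose[OF abel_deviation_tendsto_continuous[OF nonneg summable abel L that]
          filterlim_apsnd[OF filterlim_exp_neg_inverse_at_left_one]], of \<epsilon>] \<open>0 < e\<close>
    by (simp add: \<epsilon>_def case_prod_unfold dist_real_def)
  have "eventually (\<lambda>N. L * (1 / real N) < e / 4) sequentially"
    using order_tendstoD(2)[OF tendsto_mult_right_zero[OF lim_1_over_n, of L], of "e / 4"] \<open>0 < e\<close>
    by simp
  with eventually_gt_at_top[of 0]
  have "eventually (\<lambda>N. 0 < N \<and> L / real N < e / 4) sequentially"
    by eventually_elim simp
  then have "eventually (\<lambda>(m, N). (\<forall>n. 0 \<le> b m n) \<and> (\<forall>z\<in>{0..<1}. summable (\<lambda>n. b m n * z ^ n))
      \<and> 0 < N \<and> L / real N < e / 4) (F \<times>\<^sub>F sequentially)"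
    using eventually_prodI[OF eventually_conj[OF nonneg summable]] by (simp add: case_prod_unfold)
  moreover have "eventually (\<lambda>(m, N). \<bar>abel_deviation (b m) L (exp (- 1 / real N))
      (ramp_step (exp (- (1 + \<theta>))) (exp (- 1)))\<bar> < \<epsilon>) (F \<times>\<^sub>F sequentially)"
    using \<theta> by (intro small continuous_on_ramp_step) auto
  moreover have "eventually (\<lambda>(m, N). \<bar>abel_deviation (b m) L (exp (- 1 / real N))
      (ramp_step (exp (- 1)) (exp (- (1 - \<theta>))))\<bar> < \<epsilon>) (F \<times>\<^sub>F sequentially)"
    using \<theta> by (intro small continuous_on_ramp_step) auto
  ultimately show "eventually (\<lambda>x. dist ((\<lambda>(m, N). (\<Sum>k<N. b m k) / real N) x) L < e)
      (F \<times>\<^sub>F sequentially)"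
  proof eventually_elim
    case (elim x)
    obtain m N where x: "x = (m, N)" by fastforce
    have "summable (\<lambda>n. b m n * exp (- 1 / real N) ^ n)"
      using elim exp_neg_inverse_bounds[of N] unfolding x by auto
    then have "\<bar>(\<Sum>k<N. b m k) / N - L\<bar> \<le> L * \<theta> + L / N + 2 * \<epsilon>"
      using elim \<theta> L unfolding x by (intro cesaro_mean_close_of_abel_deviation) auto
    moreover have "L / N < e / 4" using elim unfolding x by simp
    ultimately have "\<bar>(\<Sum>k<N. b m k) / N - L\<bar> < e" using \<theta> unfolding \<epsilon>_def by linarith
    then show ?case unfolding x dist_real_def by simp
  qed
qed

section \<open>Power series with a uniform Abel limit\<close>

lemma summable_abs_of_complex_powser:
  fixes a :: "nat \<Rightarrow> real"
  assumes disc: "\<And>z::complex. norm z < 1 \<Longrightarrow> summable (\<lambda>k. complex_of_real (a k) * z ^ k)"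
    and y: "\<bar>y\<bar> < 1"
  shows "summable (\<lambda>k. \<bar>a k * y ^ k\<bar>)"
proof -
  define r where "r = (1 + \<bar>y\<bar>) / 2"
  have "norm (complex_of_real r) < 1" "norm (complex_of_real y) < norm (complex_of_real r)"
    unfolding norm_of_real r_def using y by auto
  from powser_insidea[OF disc[OF this(1)] this(2)]
  show ?thesis by (simp add: norm_mult norm_power abs_mult power_abs)
qed

lemma abel_mean_const_minus_partial_sums:
  fixes a :: "nat \<Rightarrow> real"
  assumes summable: "summable (\<lambda>k. \<bar>a k * y ^ k\<bar>)" and y: "0 \<le> y" "y < 1"
  shows "summable (\<lambda>n. (c - (\<Sum>k\<le>n. a k)) * y ^ n)"
    and "abel_mean (\<lambda>n. c - (\<Sum>k\<le>n. a k)) y (\<lambda>_. 1) = c - (\<Sum>k. a k * y ^ k)"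
proof -
  have "(\<lambda>n. \<Sum>k\<le>n. a k * y ^ k * y ^ (n - k)) sums ((\<Sum>k. a k * y ^ k) * (\<Sum>n. y ^ n))"
    using summable y by (intro Cauchy_product_sums) (auto simp: summable_geometric)
  moreover have "(\<Sum>k\<le>n. a k * y ^ k * y ^ (n - k)) = (\<Sum>k\<le>n. a k) * y ^ n" for n
    by (simp add: sum_distrib_right mult.assoc power_add[symmetric])
  ultimately have "(\<lambda>n. (\<Sum>k\<le>n. a k) * y ^ n) sums ((\<Sum>k. a k * y ^ k) / (1 - y))"
    using y by (simp add: suminf_geometric divide_inverse)
  from sums_diff[OF sums_mult[OF geometric_sums, of y c] this]
  have sums: "(\<lambda>n. (c - (\<Sum>k\<le>n. a k)) * y ^ n) sums ((c - (\<Sum>k. a k * y ^ k)) / (1 - y))"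
    using y by (simp add: left_diff_distrib diff_divide_distrib divide_inverse)
  then show "summable (\<lambda>n. (c - (\<Sum>k\<le>n. a k)) * y ^ n)" by (rule sums_summable)
  show "abel_mean (\<lambda>n. c - (\<Sum>k\<le>n. a k)) y (\<lambda>_. 1) = c - (\<Sum>k. a k * y ^ k)"
    unfolding abel_mean_def using y by (simp add: sums_unique[OF sums, symmetric])
qed

text \<open>The \<open>\<epsilon>/5\<close>-argument passes through one fixed \<open>f M\<close>, so no continuity of \<open>g\<close> at \<open>x\<close> is needed.\<close>

lemma uniform_limit_tendsto_diff:
  fixes f :: "nat \<Rightarrow> 'a::topological_space \<Rightarrow> 'b::real_normed_vector"
  assumes unif: "uniform_limit S f g sequentially" and "x \<in> S"
    and lim: "eventually (\<lambda>m. (f m \<longlongrightarrow> f m x) (at x within S)) sequentially"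
  shows "((\<lambda>(m, z). f m z - f m x) \<longlongrightarrow> 0) (sequentially \<times>\<^sub>F (at x within S))"
proof (rule tendstoI)
  fix e :: real
  assume "0 < e"
  then have "eventually (\<lambda>m. \<forall>z\<in>S. dist (f m z) (g z) < e / 5) sequentially"
    by (intro uniform_limitD[OF unif]) simp
  then obtain M0 where M0: "\<And>m z. M0 \<le> m \<Longrightarrow> z \<in> S \<Longrightarrow> dist (f m z) (g z) < e / 5"
    unfolding eventually_sequentially by blast
  obtain M1 where M1: "\<And>m. M1 \<le> m \<Longrightarrow> (f m \<longlongrightarrow> f m x) (at x within S)"
    using lim unfolding eventually_sequentially by blast
  define M where "M = max M0 M1"
  have "M0 \<le> M" "(f M \<longlongrightarrow> f M x) (at x within S)" unfolding M_def by (auto intro: M1)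
  then have "eventually (\<lambda>z. dist (f M z) (f M x) < e / 5) (at x within S)"
    using \<open>0 < e\<close> by (intro tendstoD) auto
  moreover have "eventually (\<lambda>z. z \<in> S) (at x within S)"
    by (simp add: eventually_at_filter)
  ultimately have near: "eventually (\<lambda>z. z \<in> S \<and> dist (f M z) (f M x) < e / 5) (at x within S)"
    by eventually_elim simp
  show "eventually (\<lambda>p. dist ((\<lambda>(m, z). f m z - f m x) p) 0 < e) (sequentially \<times>\<^sub>F (at x within S))"
    unfolding eventually_prod_filter
  proof (intro exI conjI allI impI)
    show "eventually (\<lambda>m. M0 \<le> m) sequentially" by (rule eventually_ge_at_top)
    show "eventually (\<lambda>z. z \<in> S \<and> dist (f M z) (f M x) < e / 5) (at x within S)" by (rule near)
    fix m z
    assume "M0 \<le> m" and z: "z \<in> S \<and> dist (f M z) (f M x) < e / 5"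
    then have "dist (f m z) (g z) < e / 5" "dist (f M z) (g z) < e / 5"
      "dist (f m x) (g x) < e / 5" "dist (f M x) (g x) < e / 5"
      using M0 \<open>M0 \<le> M\<close> \<open>x \<in> S\<close> by auto
    with z have "dist (f m z) (f m x) < e"
      using dist_triangle[of "f m z" "f m x" "g z"] dist_triangle[of "g z" "f m x" "f M z"]
        dist_triangle[of "f M z" "f m x" "f M x"] dist_triangle[of "f M x" "f m x" "g x"]
        dist_commute[of "g z" "f M z"] dist_commute[of "g x" "f m x"]
      by linarith
    then show "dist ((\<lambda>(m, z). f m z - f m x) (m, z)) 0 < e"
      by (simp add: dist_norm)
  qed
qed

lemma sum_partial_sums_eq_weighted_sum:
  "(\<Sum>k\<le>n. \<Sum>j\<le>k. c j) = (\<Sum>k\<le>n. real (n + 1 - k) * c k)"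
proof (induction n)
  case (Suc n)
  have "(\<Sum>k\<le>Suc n. real (Suc n + 1 - k) * c k) = (\<Sum>k\<le>n. real (n + 1 - k) * c k + c k) + c (Suc n)"
    by (simp add: of_nat_diff algebra_simps)
  then show ?case using Suc by (simp add: sum.distrib)
qed simp

lemma pser_ext_tendsto_joint:
  assumes lim: "\<And>m. m \<ge> 1 \<Longrightarrow> (pser a m \<longlongrightarrow> \<alpha> m) (at_left 1)"
    and unif: "uniform_limit {0..1} (pser_ext a \<alpha>) g sequentially"
  shows "((\<lambda>(m, z). pser_ext a \<alpha> m z - \<alpha> m) \<longlongrightarrow> 0) (sequentially \<times>\<^sub>F at_left 1)"
proof -
  have "eventually (\<lambda>m. (pser_ext a \<alpha> m \<longlongrightarrow> pser_ext a \<alpha> m 1) (at_left 1)) sequentially"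
    using eventually_ge_at_top[of 1]
  proof eventually_elim
    case (elim m)
    have "eventually (\<lambda>z. pser a m z = pser_ext a \<alpha> m z) (at_left 1)"
      by (simp add: pser_ext_def eventually_at_left_field exI[of _ 0])
    then have "(pser_ext a \<alpha> m \<longlongrightarrow> \<alpha> m) (at_left 1)"
      using lim[OF elim] by (simp add: tendsto_cong)
    then show ?case by (simp add: pser_ext_def)
  qed
  from uniform_limit_tendsto_diff[OF unif _ this[folded at_within_Icc_at_left[OF zero_less_one]]]
  show ?thesis
    by (simp add: at_within_Icc_at_left pser_ext_def[of a \<alpha> _ 1])
qed

lemma cesaro_partial_sums_tendsto:
  fixes a :: "nat \<Rightarrow> nat \<Rightarrow> real" and \<alpha> :: "nat \<Rightarrow> real"
  assumes analytic: "\<And>m (z::complex). m \<ge> 1 \<Longrightarrow> norm z < 1 \<Longrightarrow>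
      summable (\<lambda>k. complex_of_real (a m k) * z ^ k)"
    and lim: "\<And>m. m \<ge> 1 \<Longrightarrow> (pser a m \<longlongrightarrow> \<alpha> m) (at_left 1)"
    and unif: "uniform_limit {0..1} (pser_ext a \<alpha>) g sequentially"
    and L: "0 \<le> L" and tauber: "\<And>m n. m \<ge> 1 \<Longrightarrow> (\<Sum>k\<le>n. a m k) - \<alpha> m \<le> L"
  shows "((\<lambda>(m, n). \<alpha> m - (\<Sum>k\<le>n. \<Sum>j\<le>k. a m j) / real (n + 1)) \<longlongrightarrow> 0)
    (sequentially \<times>\<^sub>F sequentially)"
proof -
  define b where "b m n = L + \<alpha> m - (\<Sum>k\<le>n. a m k)" for m n
  have abel_b: "summable (\<lambda>n. b m n * z ^ n) \<and> abel_mean (b m) z (\<lambda>_. 1) = L - (pser a m z - \<alpha> m)"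
    if "1 \<le> m" "z \<in> {0..<1}" for m z
    using abel_mean_const_minus_partial_sums[of "a m" z "L + \<alpha> m"] that
      summable_abs_of_complex_powser[OF analytic, of m z]
    unfolding b_def pser_def by auto
  have "eventually (\<lambda>(m, z). L - (pser_ext a \<alpha> m z - \<alpha> m) = abel_mean (b m) z (\<lambda>_. 1))
      (sequentially \<times>\<^sub>F at_left 1)"
    using eventually_prodI[OF eventually_ge_at_top[of 1] eventually_at_left_real[OF zero_less_one]]
    by (rule eventually_mono) (auto simp: abel_b pser_ext_def)
  with tendsto_diff[OF tendsto_const pser_ext_tendsto_joint[OF lim unif], of L]
  have abel: "((\<lambda>(m, z). abel_mean (b m) z (\<lambda>_. 1)) \<longlongrightarrow> L) (sequentially \<times>\<^sub>F at_left 1)"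
    by (simp add: tendsto_cong[where F="sequentially \<times>\<^sub>F at_left 1"] case_prod_unfold)
  have "eventually (\<lambda>m. \<forall>n. 0 \<le> b m n) sequentially"
    using eventually_ge_at_top[of 1]
  proof eventually_elim
    case (elim m)
    show ?case unfolding b_def using tauber[OF elim] by (simp add: algebra_simps)
  qed
  moreover have "eventually (\<lambda>m. \<forall>z\<in>{0..<1}. summable (\<lambda>n. b m n * z ^ n)) sequentially"
    using eventually_ge_at_top[of 1] by eventually_elim (auto simp: abel_b)
  ultimately have "((\<lambda>(m, N). (\<Sum>k<N. b m k) / real N) \<longlongrightarrow> L) (sequentially \<times>\<^sub>F sequentially)"
    using abel L by (intro cesaro_tendsto_of_abel_tendsto) auto
  from LIM_zero[OF filterlim_compose[OF this filterlim_apsnd[OF filterlim_Suc]]]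
  have "((\<lambda>x. (\<Sum>k\<le>snd x. b (fst x) k) / real (snd x + 1) - L) \<longlongrightarrow> 0) (sequentially \<times>\<^sub>F sequentially)"
    by (simp add: case_prod_unfold lessThan_Suc_atMost)
  moreover have "(\<Sum>k\<le>n. b m k) / real (n + 1) - L = \<alpha> m - (\<Sum>k\<le>n. \<Sum>j\<le>k. a m j) / real (n + 1)"
    for m n unfolding b_def by (simp add: sum_subtractf field_simps)
  ultimately show ?thesis by (simp add: case_prod_unfold)
qed

theorem lemma1:
  fixes a :: "nat \<Rightarrow> nat \<Rightarrow> real" and \<alpha> :: "nat \<Rightarrow> real" and K L :: real
  assumes analytic: "\<And>m (z::complex). m \<ge> 1 \<Longrightarrow> norm z < 1 \<Longrightarrow>
             summable (\<lambda>k. complex_of_real (a m k) * z ^ k)"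
    and K_pos: "0 < K"
    and lim: "\<And>m. m \<ge> 1 \<Longrightarrow> (pser a m \<longlongrightarrow> \<alpha> m) (at_left 1)"
    and bound: "\<And>m. m \<ge> 1 \<Longrightarrow> \<bar>\<alpha> m\<bar> < K"
    and unif: "\<exists>g. uniform_limit {0..1} (pser_ext a \<alpha>) g sequentially"
    and L_pos: "0 < L"
    and tauber: "\<And>m n. m \<ge> 1 \<Longrightarrow> (\<Sum>k\<le>n. a m k) - \<alpha> m < L"
  shows "\<forall>\<epsilon>>0. \<exists>N\<ge>1. \<forall>m n. m > N \<and> n > N \<longrightarrow>
           \<bar>\<alpha> m - (\<Sum>k\<le>n. real (n + 1 - k) * a m k) / real (n + 1)\<bar>
             = \<bar>\<alpha> m - (\<Sum>k\<le>n. (\<Sum>j\<le>k. a m j)) / real (n + 1)\<bar>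
           \<and> \<bar>\<alpha> m - (\<Sum>k\<le>n. (\<Sum>j\<le>k. a m j)) / real (n + 1)\<bar> < \<epsilon>"
proof (intro allI impI)
  fix \<epsilon> :: real
  assume "0 < \<epsilon>"
  obtain g where g: "uniform_limit {0..1} (pser_ext a \<alpha>) g sequentially" using unif by blast
  have "(\<Sum>k\<le>n. a m k) - \<alpha> m \<le> L" if "m \<ge> 1" for m n
    using less_imp_le[OF tauber[OF that]] .
  from cesaro_partial_sums_tendsto[OF analytic lim g less_imp_le[OF L_pos] this]
  have "((\<lambda>(m, n). \<alpha> m - (\<Sum>k\<le>n. \<Sum>j\<le>k. a m j) / real (n + 1)) \<longlongrightarrow> 0) (sequentially \<times>\<^sub>F sequentially)" .
  from tendstoD[OF this \<open>0 < \<epsilon>\<close>] obtain N where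
    N: "\<And>m n. N \<le> m \<Longrightarrow> N \<le> n \<Longrightarrow> \<bar>\<alpha> m - (\<Sum>k\<le>n. \<Sum>j\<le>k. a m j) / real (n + 1)\<bar> < \<epsilon>"
    unfolding eventually_prod_sequentially by (auto simp: dist_real_def)
  show "\<exists>N\<ge>1. \<forall>m n. m > N \<and> n > N \<longrightarrow>
           \<bar>\<alpha> m - (\<Sum>k\<le>n. real (n + 1 - k) * a m k) / real (n + 1)\<bar>
             = \<bar>\<alpha> m - (\<Sum>k\<le>n. (\<Sum>j\<le>k. a m j)) / real (n + 1)\<bar>
           \<and> \<bar>\<alpha> m - (\<Sum>k\<le>n. (\<Sum>j\<le>k. a m j)) / real (n + 1)\<bar> < \<epsilon>"
    using N by (intro exI[of _ "max N 1"]) (auto simp: sum_partial_sums_eq_weighted_sum)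
qed

end
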